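(* Let $G=\mathrm{GL}_n$ or $\mathrm{GSp}_{2n}$ and let $M\supset A$ be the Levi subgroup of a standard parabolic subgroup. Let $\nu\in X_{M,\mathbf Q}\cap X_*(A)_{\mathbf Q,\mathrm{dom}}$ be such that its image under $\kappa_M\otimes\mathbf Q$ lies in $\pi_1(M)$. Let $\tilde\nu\in X_*(A)$ be the unique $M$-dominant $M$-minuscule element with $\kappa_M(\tilde\nu)=\kappa_M(\nu)$, and let $[\tilde\nu]$ be the unique $G$-dominant element of $W\tilde\nu$. Then for every $\mu\in X_*(A)_{\mathrm{dom}}$ with $\nu\le\mu$ we have $\nu\le[\tilde\nu]\le\mu$.
   Context: $G=\mathrm{GL}_n$ or $\mathrm{GSp}_{2n}$ over a $p$-adic field, with diagonal maximal split torus $A$, standard Borel $B\supset A$, Weyl group $W$; $X_*(A)$ the cocharacter group ($\mathbf Z^n$, resp. $\{\mu\in\mathbf Z^{2n}:\mu_i+\mu_{2n+1-i}$ constant$\}$). Dominant means $B$-dominant (non-increasing entries); $X_*(A)_{\mathrm{dom}}$, $X_*(A)_{\mathbf Q,\mathrm{dom}}$ denote dominant elements of $X_*(A)$, $X_*(A)\otimes\mathbf Q$. $\nu\le\mu$ means $\mu-\nu$ is a non-negative linear combination of positive coroots. Standard Levi subgroups: block diagonal $M_{(m_1,\dots,m_r)}$ for $\mathrm{GL}_n$, intersection of $\mathrm{GSp}_{2n}$ with $M_{(m_1,\dots,m_r,2j,m_r,\dots,m_1)}$ for $\mathrm{GSp}_{2n}$. $A_M$ is the maximal split torus in the center of $M$,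 $X_M=X_*(A_M)\subset X_*(A)$, $X_{M,\mathbf Q}=X_M\otimes\mathbf Q$. $\pi_1(M)=X_*(A)/(\text{coroot lattice of }M)$ (a free abelian group), $\kappa_M:X_*(A)\to\pi_1(M)$ the projection. An element is $M$-dominant if dominant for $B\cap M$, and $M$-minuscule if $\langle\tilde\nu,\alpha\rangle\in\{0,\pm1\}$ for all roots $\alpha$ of $M$; the $M$-dominant $M$-minuscule elements map bijectively onto $\pi_1(M)$. *)

theory Defs
  imports Complex_Main
begin

text \<open>Cocharacters of the diagonal torus are
  modelled as functions nat => rat, of which only the coordinates 0,...,N-1 matter
  (N = n for GL n and N = 2n for GSp 2n); indices are 0-based, so the coordinate
  1-based i+1 corresponds to index i and i |-> N-1-i is the symplectic involution.\<close>

datatype grp = GL nat | GSp nat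

fun rk :: "grp \<Rightarrow> nat" where
  "rk (GL n) = n"
| "rk (GSp n) = n"

fun dimN :: "grp \<Rightarrow> nat" where
  "dimN (GL n) = n"
| "dimN (GSp n) = 2 * n"

fun is_GSp :: "grp \<Rightarrow> bool" where
  "is_GSp (GL n) = False"
| "is_GSp (GSp n) = True"

definition valid_grp :: "grp \<Rightarrow> bool" where
  "valid_grp G \<longleftrightarrow> 0 < rk G"

definition inXQ :: "grp \<Rightarrow> (nat \<Rightarrow> rat) \<Rightarrow> bool" where
  "inXQ G x \<longleftrightarrow> (is_GSp G \<longrightarrow>
      (\<forall>i<dimN G. x i + x (dimN G - 1 - i) = x 0 + x (dimN G - 1)))"

definition inX :: "grp \<Rightarrow> (nat \<Rightarrow> rat) \<Rightarrow> bool" where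
  "inX G x \<longleftrightarrow> inXQ G x \<and> (\<forall>i<dimN G. x i \<in> \<int>)"

definition dominant :: "grp \<Rightarrow> (nat \<Rightarrow> rat) \<Rightarrow> bool" where
  "dominant G x \<longleftrightarrow> (\<forall>i j. i < j \<and> j < dimN G \<longrightarrow> x j \<le> x i)"

definition ev :: "nat \<Rightarrow> nat \<Rightarrow> rat" where
  "ev i k = (if k = i then 1 else 0)"

text \<open>Roots are the characters x |-> x_i - x_j (i \<noteq> j, i,j < N), restricted to X_*(A).
  The coroot attached to the root x_i - x_j:\<close>
definition coroot :: "grp \<Rightarrow> nat \<Rightarrow> nat \<Rightarrow> nat \<Rightarrow> rat" where
  "coroot G i j k =
     (if \<not> is_GSp G \<or> j = dimN G - 1 - i then ev i k - ev j k
      else ev i k - ev j k + ev (dimN G - 1 - j) k - ev (dimN G - 1 - i) k)"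

definition coroot_le :: "grp \<Rightarrow> (nat \<Rightarrow> rat) \<Rightarrow> (nat \<Rightarrow> rat) \<Rightarrow> bool" where
  "coroot_le G nu mu \<longleftrightarrow> (\<exists>c :: nat \<Rightarrow> nat \<Rightarrow> rat. (\<forall>i j. 0 \<le> c i j) \<and>
     (\<forall>k<dimN G. mu k - nu k =
        (\<Sum>i<dimN G. \<Sum>j<dimN G. if i < j then c i j * coroot G i j k else 0)))"

definition weyl :: "grp \<Rightarrow> (nat \<Rightarrow> nat) set" where
  "weyl G = {s. bij_betw s {..<dimN G} {..<dimN G} \<and>
     (is_GSp G \<longrightarrow> (\<forall>i<dimN G. s (dimN G - 1 - i) = dimN G - 1 - s i))}"

definition in_W_orbit :: "grp \<Rightarrow> (nat \<Rightarrow> rat) \<Rightarrow> (nat \<Rightarrow> rat) \<Rightarrow> bool" where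
  "in_W_orbit G y x \<longleftrightarrow> (\<exists>s\<in>weyl G. \<forall>k<dimN G. y k = x (s k))"

text \<open>Standard Levi subgroups: block compositions (m_1,...,m_r) of N (positive parts),
  palindromic in the GSp case.\<close>
definition std_levi :: "grp \<Rightarrow> nat list \<Rightarrow> bool" where
  "std_levi G ms \<longleftrightarrow> (\<forall>m\<in>set ms. 0 < m) \<and> sum_list ms = dimN G \<and>
     (is_GSp G \<longrightarrow> rev ms = ms)"

definition same_block :: "nat list \<Rightarrow> nat \<Rightarrow> nat \<Rightarrow> bool" where
  "same_block ms i j \<longleftrightarrow> (\<exists>k<length ms.
     sum_list (take k ms) \<le> i \<and> i < sum_list (take (Suc k) ms) \<and>
     sum_list (take k ms) \<le> j \<and> j < sum_list (take (Suc k) ms))"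

definition root_of_M :: "grp \<Rightarrow> nat list \<Rightarrow> nat \<Rightarrow> nat \<Rightarrow> bool" where
  "root_of_M G ms i j \<longleftrightarrow> i < dimN G \<and> j < dimN G \<and> i \<noteq> j \<and> same_block ms i j"

definition inXMQ :: "grp \<Rightarrow> nat list \<Rightarrow> (nat \<Rightarrow> rat) \<Rightarrow> bool" where
  "inXMQ G ms x \<longleftrightarrow> inXQ G x \<and> (\<forall>i j. root_of_M G ms i j \<longrightarrow> x i - x j = 0)"

text \<open>Q-span of the coroots of M = kernel of kappa_M \<otimes> Q.\<close>
definition in_coroot_span_M :: "grp \<Rightarrow> nat list \<Rightarrow> (nat \<Rightarrow> rat) \<Rightarrow> bool" where
  "in_coroot_span_M G ms x \<longleftrightarrow> (\<exists>c :: nat \<Rightarrow> nat \<Rightarrow> rat.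
     \<forall>k<dimN G. x k =
        (\<Sum>i<dimN G. \<Sum>j<dimN G. if root_of_M G ms i j then c i j * coroot G i j k else 0))"

definition kappa_eq :: "grp \<Rightarrow> nat list \<Rightarrow> (nat \<Rightarrow> rat) \<Rightarrow> (nat \<Rightarrow> rat) \<Rightarrow> bool" where
  "kappa_eq G ms x y \<longleftrightarrow> in_coroot_span_M G ms (\<lambda>k. x k - y k)"

text \<open>(kappa_M \<otimes> Q)(nu) lies in pi_1(M) (= image of X_*(A)).\<close>
definition kappa_integral :: "grp \<Rightarrow> nat list \<Rightarrow> (nat \<Rightarrow> rat) \<Rightarrow> bool" where
  "kappa_integral G ms nu \<longleftrightarrow> (\<exists>x. inX G x \<and> kappa_eq G ms nu x)"

definition M_dominant :: "grp \<Rightarrow> nat list \<Rightarrow> (nat \<Rightarrow> rat) \<Rightarrow> bool" where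
  "M_dominant G ms x \<longleftrightarrow> (\<forall>i j. root_of_M G ms i j \<and> i < j \<longrightarrow> 0 \<le> x i - x j)"

definition M_minuscule :: "grp \<Rightarrow> nat list \<Rightarrow> (nat \<Rightarrow> rat) \<Rightarrow> bool" where
  "M_minuscule G ms x \<longleftrightarrow> (\<forall>i j. root_of_M G ms i j \<longrightarrow> x i - x j \<in> {-1, 0, 1})"

end

theory Submission
  imports Defs
begin

text \<open>On \<open>X\<^sub>*(A)\<^sub>\<bbbQ>\<close> the order \<open>x \<le> y\<close> is read off partial sums: the first \<open>p\<close> coordinates
  of \<open>y - x\<close> have non-negative sum for every \<open>p\<close>, and the total sum is \<open>0\<close> (for \<open>GSp\<close> the
  symmetry \<open>x\<^sub>i + x\<^sub>N\<^sub>+\<^sub>1\<^sub>-\<^sub>i = const\<close> lets the simple coroots with \<open>i \<le> n\<close> do all the work).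
  For dominant \<open>y\<close> the sum of its first \<open>p\<close> coordinates is \<open>min\<^sub>a (p a + E\<^sub>a(y))\<close> with the
  excess \<open>E\<^sub>a(y) = \<Sum>\<^sub>i max(y\<^sub>i - a, 0)\<close>, attained at \<open>a = y\<^sub>p\<close>. Hence \<open>x \<le> y\<close> as soon as the totals
  agree and \<open>E\<^sub>a(x) \<le> E\<^sub>a(y)\<close> for all \<open>a\<close> among the entries of \<open>y\<close>; conversely \<open>x \<le> y\<close> with \<open>x\<close>
  dominant gives \<open>E\<^sub>a(x) \<le> E\<^sub>a(y)\<close> for all \<open>a\<close>.

  On each block of \<open>M\<close>, \<open>\<nu>\<close> is constant and has the same block sum as \<open>\<nu>\<^sup>~\<close>, so convexity of
  \<open>t \<mapsto> max(t, 0)\<close> gives \<open>E\<^sub>a(\<nu>) \<le> E\<^sub>a(\<nu>\<^sup>~)\<close>; for integral \<open>a\<close> this is an equality, because the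
  integral entries of the \<open>M\<close>-minuscule \<open>\<nu>\<^sup>~\<close> on a block differ by at most one and thus lie on one
  side of \<open>a\<close>. As \<open>E\<^sub>a\<close> is \<open>W\<close>-invariant, \<open>E\<^sub>a(\<nu>) \<le> E\<^sub>a([\<nu>\<^sup>~])\<close> gives \<open>\<nu> \<le> [\<nu>\<^sup>~]\<close>, and
  \<open>E\<^sub>a([\<nu>\<^sup>~]) = E\<^sub>a(\<nu>) \<le> E\<^sub>a(\<mu>)\<close> for integral \<open>a\<close> gives \<open>[\<nu>\<^sup>~] \<le> \<mu>\<close>, since \<open>\<mu>\<close> is integral.\<close>

section \<open>Coroot combinations and the dominance order\<close>

definition coroot_comb :: "grp \<Rightarrow> (nat \<Rightarrow> nat \<Rightarrow> bool) \<Rightarrow> (nat \<Rightarrow> nat \<Rightarrow> rat) \<Rightarrow> nat \<Rightarrow> rat" where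
  "coroot_comb G P c k = (\<Sum>i<dimN G. \<Sum>j<dimN G. if P i j then c i j * coroot G i j k else 0)"

lemma coroot_le_iff_coroot_comb:
  "coroot_le G x y \<longleftrightarrow>
     (\<exists>c. (\<forall>i j. 0 \<le> c i j) \<and> (\<forall>k<dimN G. y k - x k = coroot_comb G (<) c k))"
  unfolding coroot_le_def coroot_comb_def ..

lemma kappa_eq_iff_coroot_comb:
  "kappa_eq G ms x y \<longleftrightarrow> (\<exists>c. \<forall>k<dimN G. x k - y k = coroot_comb G (root_of_M G ms) c k)"
  unfolding kappa_eq_def in_coroot_span_M_def coroot_comb_def ..

lemma sum_coroot_comb:
  "(\<Sum>k\<in>K. coroot_comb G P c k) =
     (\<Sum>i<dimN G. \<Sum>j<dimN G. if P i j then c i j * (\<Sum>k\<in>K. coroot G i j k) else 0)"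
proof -
  have "(\<Sum>k\<in>K. coroot_comb G P c k) =
      (\<Sum>i<dimN G. \<Sum>j<dimN G. \<Sum>k\<in>K. if P i j then c i j * coroot G i j k else 0)"
    unfolding coroot_comb_def by (subst sum.swap) (simp only: sum.swap[of _ K])
  also have "\<dots> = (\<Sum>i<dimN G. \<Sum>j<dimN G. if P i j then c i j * (\<Sum>k\<in>K. coroot G i j k) else 0)"
    by (auto simp: sum_distrib_left intro!: sum.cong)
  finally show ?thesis .
qed

lemma sum_ev: "(\<Sum>k\<in>A. ev t k) = (if finite A \<and> t \<in> A then 1 else 0)"
  unfolding ev_def by (cases "finite A") auto

lemma sum_coroot:
  "(\<Sum>k\<in>A. coroot G i j k) =
     (if \<not> is_GSp G \<or> j = dimN G - 1 - i then (\<Sum>k\<in>A. ev i k) - (\<Sum>k\<in>A. ev j k)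
      else (\<Sum>k\<in>A. ev i k) - (\<Sum>k\<in>A. ev j k)
         + (\<Sum>k\<in>A. ev (dimN G - 1 - j) k) - (\<Sum>k\<in>A. ev (dimN G - 1 - i) k))"
  unfolding coroot_def by (simp add: sum.distrib sum_subtractf)

lemma sum_coroot_eq_0: "i < dimN G \<Longrightarrow> j < dimN G \<Longrightarrow> (\<Sum>k<dimN G. coroot G i j k) = 0"
  unfolding sum_coroot by (cases G) (simp_all add: sum_ev)

lemma sum_coroot_prefix_nonneg: "i < j \<Longrightarrow> j < dimN G \<Longrightarrow> 0 \<le> (\<Sum>k<p. coroot G i j k)"
  unfolding sum_coroot sum_ev by (cases G) (auto simp del: One_nat_def)

definition partial_sum :: "nat \<Rightarrow> (nat \<Rightarrow> rat) \<Rightarrow> rat" where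
  "partial_sum p x = (\<Sum>i<p. x i)"

lemma partial_sum_diff: "partial_sum p y - partial_sum p x = (\<Sum>k<p. y k - x k)"
  unfolding partial_sum_def by (simp add: sum_subtractf)

lemma coroot_le_imp_partial_sum_le:
  assumes "coroot_le G x y" "p \<le> dimN G"
  shows "partial_sum p x \<le> partial_sum p y"
proof -
  obtain c where c: "\<forall>i j. 0 \<le> c i j" "\<forall>k<dimN G. y k - x k = coroot_comb G (<) c k"
    using assms(1) unfolding coroot_le_iff_coroot_comb by blast
  have "partial_sum p y - partial_sum p x = (\<Sum>k<p. coroot_comb G (<) c k)"
    unfolding partial_sum_diff using c(2) assms(2) by (intro sum.cong) auto
  also have "\<dots> \<ge> 0"
    unfolding sum_coroot_comb using c(1) sum_coroot_prefix_nonneg by (auto intro!: sum_nonneg)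
  finally show ?thesis by simp
qed

lemma coroot_le_imp_partial_sum_eq:
  assumes "coroot_le G x y"
  shows "partial_sum (dimN G) x = partial_sum (dimN G) y"
proof -
  obtain c where c: "\<forall>k<dimN G. y k - x k = coroot_comb G (<) c k"
    using assms unfolding coroot_le_iff_coroot_comb by blast
  have "partial_sum (dimN G) y - partial_sum (dimN G) x = (\<Sum>k<dimN G. coroot_comb G (<) c k)"
    unfolding partial_sum_diff using c by (intro sum.cong) auto
  also have "\<dots> = 0"
    unfolding sum_coroot_comb by (intro sum.neutral ballI) (simp add: sum_coroot_eq_0)
  finally show ?thesis by simp
qed

lemma coroot_flip:
  assumes "is_GSp G" "i < dimN G" "j < dimN G" "k < dimN G"
  shows "coroot G i j (dimN G - 1 - k) = - coroot G i j k"
proof -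
  have ev_flip: "ev t (dimN G - Suc k) = ev (dimN G - Suc t) k" if "t < dimN G" for t
    using that assms(4) unfolding ev_def by auto
  have flip_flip: "dimN G - Suc (dimN G - Suc t) = t" if "t < dimN G" for t
    using that by simp
  show ?thesis
    using assms unfolding coroot_def by (auto simp: ev_flip flip_flip)
qed

lemma coroot_comb_flip:
  assumes "is_GSp G" "k < dimN G"
  shows "coroot_comb G P c (dimN G - 1 - k) = - coroot_comb G P c k"
  unfolding coroot_comb_def sum_negf[symmetric]
  by (intro sum.cong refl) (use coroot_flip[OF assms(1)] assms(2) in auto)

lemma coroot_comb_simple:
  "coroot_comb G (<) (\<lambda>i j. if j = Suc i \<and> i < m then w i else 0) k =
     (\<Sum>i<dimN G. if Suc i < dimN G \<and> i < m then w i * coroot G i (Suc i) k else 0)"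
  unfolding coroot_comb_def
proof (intro sum.cong refl)
  fix i
  have "(\<Sum>j<dimN G. if i < j then (if j = Suc i \<and> i < m then w i else 0) * coroot G i j k else 0)
      = (\<Sum>j<dimN G. if j = Suc i then (if i < m then w i * coroot G i j k else 0) else 0)"
    by (intro sum.cong) auto
  also have "\<dots> = (if Suc i < dimN G \<and> i < m then w i * coroot G i (Suc i) k else 0)"
    by (subst sum.delta) auto
  finally show "(\<Sum>j<dimN G. if i < j then (if j = Suc i \<and> i < m then w i else 0) * coroot G i j k else 0)
      = (if Suc i < dimN G \<and> i < m then w i * coroot G i (Suc i) k else 0)" .
qed

lemma sum_telescope_ev:
  assumes "k < m" "D 0 = 0"
  shows "(\<Sum>i<m. D (Suc i) * (ev i k - ev (Suc i) k)) = D (Suc k) - D k"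
proof -
  have "(\<Sum>i<m. D (Suc i) * ev i k) = D (Suc k)"
    unfolding ev_def using assms(1) by (simp add: if_distrib cong: if_cong)
  moreover have "(\<Sum>i<m. D (Suc i) * ev (Suc i) k) = D k"
    using assms unfolding ev_def by (cases k) (simp_all add: if_distrib cong: if_cong)
  ultimately show ?thesis by (simp add: right_diff_distrib sum_subtractf)
qed

lemma partial_sum_Suc: "partial_sum (Suc k) x = partial_sum k x + x k"
  unfolding partial_sum_def by simp

lemma coroot_le_GL_if_partial_sum_le:
  assumes G: "G = GL n"
    and total: "partial_sum n x = partial_sum n y"
    and prefix: "\<forall>p\<le>n. partial_sum p x \<le> partial_sum p y"
  shows "coroot_le G x y"
proof -
  define D where "D p = partial_sum p y - partial_sum p x" for p
  \<comment> \<open>the simple coroot \<open>e\<^sub>i - e\<^sub>i\<^sub>+\<^sub>1\<close> gets the gap of the \<open>(i+1)\<close>-st partial sums\<close>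
  define c where "c i j = (if j = Suc i \<and> i < n then D (Suc i) else 0)" for i j
  have "D n = 0" using total unfolding D_def by simp
  have "y k - x k = coroot_comb G (<) c k" if "k < n" for k
  proof -
    have "coroot_comb G (<) c k = (\<Sum>i<n. D (Suc i) * (ev i k - ev (Suc i) k))"
      unfolding c_def coroot_comb_simple using \<open>D n = 0\<close>
      by (intro sum.cong) (auto simp: G coroot_def, metis Suc_lessI)
    also have "\<dots> = D (Suc k) - D k"
      by (rule sum_telescope_ev) (simp_all add: that D_def partial_sum_def)
    finally show ?thesis unfolding D_def partial_sum_Suc by simp
  qed
  moreover have "0 \<le> c i j" for i j
    using prefix unfolding c_def D_def by auto
  ultimately show ?thesis
    unfolding coroot_le_iff_coroot_comb by (auto simp: G)
qed

lemma partial_sum_of_flip_invariant: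
  assumes "\<forall>i<N. x i + x (N - 1 - i) = C"
  shows "2 * partial_sum N x = of_nat N * C"
proof -
  have "partial_sum N x = (\<Sum>i<N. x (N - 1 - i))"
    unfolding partial_sum_def using sum.nat_diff_reindex[of x N] by simp
  then have "2 * partial_sum N x = (\<Sum>i<N. x i + x (N - 1 - i))"
    unfolding partial_sum_def by (simp add: sum.distrib)
  also have "\<dots> = of_nat N * C" using assms by simp
  finally show ?thesis .
qed

lemma inXQ_diff_flip:
  assumes "is_GSp G" "inXQ G x" "inXQ G y"
    and "partial_sum (dimN G) x = partial_sum (dimN G) y" and "k < dimN G"
  shows "y (dimN G - 1 - k) - x (dimN G - 1 - k) = - (y k - x k)"
proof -
  let ?N = "dimN G"
  have x: "\<forall>i<?N. x i + x (?N - 1 - i) = x 0 + x (?N - 1)"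
    and y: "\<forall>i<?N. y i + y (?N - 1 - i) = y 0 + y (?N - 1)"
    using assms(1-3) unfolding inXQ_def by blast+
  have "x 0 + x (?N - 1) = y 0 + y (?N - 1)"
    using partial_sum_of_flip_invariant[OF x] partial_sum_of_flip_invariant[OF y] assms(4,5) by simp
  moreover have "x k + x (?N - 1 - k) = x 0 + x (?N - 1)" "y k + y (?N - 1 - k) = y 0 + y (?N - 1)"
    using x y assms(5) by blast+
  ultimately show ?thesis by linarith
qed

lemma coroot_GSp_lower:
  "i < n \<Longrightarrow> k < n \<Longrightarrow> coroot (GSp n) i (Suc i) k = ev i k - ev (Suc i) k"
  unfolding coroot_def ev_def by auto

lemma coroot_le_GSp_if_partial_sum_le:
  assumes G: "G = GSp n" and "inXQ G x" "inXQ G y"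
    and total: "partial_sum (2 * n) x = partial_sum (2 * n) y"
    and prefix: "\<forall>p\<le>2 * n. partial_sum p x \<le> partial_sum p y"
  shows "coroot_le G x y"
proof -
  define D where "D p = partial_sum p y - partial_sum p x" for p
  define c where "c i j = (if j = Suc i \<and> i < n then D (Suc i) else 0)" for i j
  \<comment> \<open>\<open>y - x\<close> and every coroot combination are odd under \<open>k \<mapsto> 2n - 1 - k\<close>, so the first
    \<open>n\<close> coordinates suffice; there the coroots used reduce to \<open>e\<^sub>i - e\<^sub>i\<^sub>+\<^sub>1\<close>\<close>
  have lower: "y k - x k = coroot_comb G (<) c k" if "k < n" for k
  proof -
    have "coroot_comb G (<) c k = (\<Sum>i<n. D (Suc i) * (ev i k - ev (Suc i) k))"
      unfolding c_def coroot_comb_simple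
    proof (rule sum.mono_neutral_cong_right)
      show "(if Suc i < dimN G \<and> i < n then D (Suc i) * coroot G i (Suc i) k else 0)
          = D (Suc i) * (ev i k - ev (Suc i) k)"
        if "i \<in> {..<n}" for i
        using that \<open>k < n\<close> by (simp add: G coroot_GSp_lower)
    qed (auto simp: G)
    also have "\<dots> = D (Suc k) - D k"
      by (rule sum_telescope_ev) (simp_all add: that D_def partial_sum_def)
    finally show ?thesis unfolding D_def partial_sum_Suc by simp
  qed
  have "y k - x k = coroot_comb G (<) c k" if "k < 2 * n" for k
  proof (cases "k < n")
    case False
    then have "2 * n - 1 - k < n" and k: "k = 2 * n - 1 - (2 * n - 1 - k)" using that by auto
    have "y k - x k = - (y (2 * n - 1 - k) - x (2 * n - 1 - k))"
      using inXQ_diff_flip[OF _ assms(2,3)] total that by (simp add: G)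
    also have "\<dots> = - coroot_comb G (<) c (2 * n - 1 - k)"
      using lower[OF \<open>2 * n - 1 - k < n\<close>] by simp
    also have "\<dots> = coroot_comb G (<) c k"
      using coroot_comb_flip[of G "2 * n - 1 - k"] k that by (simp add: G)
    finally show ?thesis .
  qed (rule lower)
  moreover have "0 \<le> c i j" for i j
    using prefix unfolding c_def D_def by auto
  ultimately show ?thesis
    unfolding coroot_le_iff_coroot_comb by (auto simp: G)
qed

lemma coroot_le_iff_partial_sum_le:
  assumes "inXQ G x" "inXQ G y"
  shows "coroot_le G x y \<longleftrightarrow> partial_sum (dimN G) x = partial_sum (dimN G) y
           \<and> (\<forall>p\<le>dimN G. partial_sum p x \<le> partial_sum p y)"
proof
  assume "coroot_le G x y"
  then show "partial_sum (dimN G) x = partial_sum (dimN G) y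
      \<and> (\<forall>p\<le>dimN G. partial_sum p x \<le> partial_sum p y)"
    using coroot_le_imp_partial_sum_eq coroot_le_imp_partial_sum_le by blast
next
  assume "partial_sum (dimN G) x = partial_sum (dimN G) y
      \<and> (\<forall>p\<le>dimN G. partial_sum p x \<le> partial_sum p y)"
  then show "coroot_le G x y"
    using assms coroot_le_GL_if_partial_sum_le coroot_le_GSp_if_partial_sum_le by (cases G) auto
qed

section \<open>Excess functions\<close>

definition excess :: "nat \<Rightarrow> rat \<Rightarrow> (nat \<Rightarrow> rat) \<Rightarrow> rat" where
  "excess N a x = (\<Sum>i<N. max (x i - a) 0)"

lemma partial_sum_le_excess:
  assumes "p \<le> N"
  shows "partial_sum p x \<le> of_nat p * a + excess N a x"
proof -
  have "partial_sum p x = of_nat p * a + (\<Sum>i<p. x i - a)"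
    unfolding partial_sum_def by (simp add: sum_subtractf)
  also have "(\<Sum>i<p. x i - a) \<le> (\<Sum>i<p. max (x i - a) 0)"
    by (intro sum_mono) simp
  also have "\<dots> \<le> excess N a x"
    unfolding excess_def using assms by (intro sum_mono2) auto
  finally show ?thesis by simp
qed

lemma excess_eq_partial_sum:
  assumes "q \<le> N" "\<And>i. i < q \<Longrightarrow> a \<le> x i" "\<And>i. q \<le> i \<Longrightarrow> i < N \<Longrightarrow> x i \<le> a"
  shows "excess N a x = partial_sum q x - of_nat q * a"
proof -
  have "excess N a x = (\<Sum>i<q. max (x i - a) 0) + (\<Sum>i\<in>{q..<N}. max (x i - a) 0)"
    unfolding excess_def using assms(1) by (simp add: sum.atLeastLessThan_concat lessThan_atLeast0)
  also have "(\<Sum>i<q. max (x i - a) 0) = (\<Sum>i<q. x i - a)"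
    using assms(2) by (intro sum.cong) auto
  also have "(\<Sum>i\<in>{q..<N}. max (x i - a) 0) = 0"
    using assms(3) by (intro sum.neutral) auto
  finally show ?thesis unfolding partial_sum_def by (simp add: sum_subtractf)
qed

lemma excess_antitone_eq_partial_sum:
  assumes "\<forall>i j. i < j \<and> j < N \<longrightarrow> x j \<le> x i"
  shows "\<exists>q\<le>N. excess N a x = partial_sum q x - of_nat q * a"
proof -
  define q where "q = (LEAST i. N \<le> i \<or> x i \<le> a)"
  have q: "N \<le> q \<or> x q \<le> a"
    unfolding q_def by (rule LeastI[of _ N]) simp
  have "q \<le> N"
    unfolding q_def by (rule Least_le) simp
  have "a \<le> x i" if "i < q" for i
    using not_less_Least[OF that[unfolded q_def]] by (auto simp: q_def)
  moreover have "x i \<le> a" if "q \<le> i" "i < N" for i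
  proof -
    have "x q \<le> a" using q that by simp
    moreover have "x i \<le> x q" using assms that by (cases "q = i") auto
    ultimately show ?thesis by simp
  qed
  ultimately show ?thesis
    using excess_eq_partial_sum[OF \<open>q \<le> N\<close>] \<open>q \<le> N\<close> by blast
qed

lemma excess_antitone_at_entry:
  assumes "\<forall>i j. i < j \<and> j < N \<longrightarrow> x j \<le> x i" "0 < p" "p \<le> N"
  shows "excess N (x (p - 1)) x = partial_sum p x - of_nat p * x (p - 1)"
proof (rule excess_eq_partial_sum)
  fix i assume "i < p"
  then consider "i = p - 1" | "i < p - 1" by linarith
  then show "x (p - 1) \<le> x i"
    by cases (use assms(1) assms(3) in auto)
next
  fix i assume "p \<le> i" "i < N"
  then show "x i \<le> x (p - 1)" using assms by auto
qed (use assms in auto)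

lemma excess_mono_if_partial_sum_le:
  assumes "\<forall>i j. i < j \<and> j < N \<longrightarrow> x j \<le> x i"
    and "\<forall>q\<le>N. partial_sum q x \<le> partial_sum q y"
  shows "excess N a x \<le> excess N a y"
proof -
  obtain q where q: "q \<le> N" "excess N a x = partial_sum q x - of_nat q * a"
    using excess_antitone_eq_partial_sum[OF assms(1)] by blast
  have "partial_sum q x \<le> partial_sum q y"
    using assms(2) q(1) by blast
  moreover have "partial_sum q y \<le> of_nat q * a + excess N a y"
    using partial_sum_le_excess[OF q(1)] .
  ultimately show ?thesis using q(2) by simp
qed

lemma partial_sum_le_if_excess_le:
  assumes "\<forall>i j. i < j \<and> j < N \<longrightarrow> y j \<le> y i" "\<forall>i<N. y i \<in> S"
    and "\<forall>a\<in>S. excess N a x \<le> excess N a y" and "p \<le> N"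
  shows "partial_sum p x \<le> partial_sum p y"
proof (cases "p = 0")
  case False
  let ?a = "y (p - 1)"
  have "partial_sum p x \<le> of_nat p * ?a + excess N ?a x"
    using partial_sum_le_excess[OF assms(4)] .
  also have "excess N ?a x \<le> excess N ?a y"
    using assms(2-4) False by simp
  also have "excess N ?a y = partial_sum p y - of_nat p * ?a"
    using excess_antitone_at_entry[OF assms(1)] False assms(4) by simp
  finally show ?thesis by simp
qed (simp add: partial_sum_def)

section \<open>Blocks of a standard Levi subgroup\<close>

definition block_start :: "nat list \<Rightarrow> nat \<Rightarrow> nat" where
  "block_start ms k = sum_list (take k ms)"

definition block :: "nat list \<Rightarrow> nat \<Rightarrow> nat set" where
  "block ms k = {block_start ms k..<block_start ms (Suc k)}"

lemma same_block_iff: "same_block ms i j \<longleftrightarrow> (\<exists>k<length ms. i \<in> block ms k \<and> j \<in> block ms k)"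
  unfolding same_block_def block_def block_start_def by auto

lemma block_start_mono:
  assumes "k \<le> k'"
  shows "block_start ms k \<le> block_start ms k'"
proof -
  have "take k' ms = take k ms @ drop k (take k' ms)"
    using assms by (metis append_take_drop_id min.absorb1 take_take)
  then show ?thesis
    unfolding block_start_def by (metis le_add1 sum_list_append)
qed

lemma block_start_length: "block_start ms (length ms) = sum_list ms"
  unfolding block_start_def by simp

lemma block_subset: "k < length ms \<Longrightarrow> block ms k \<subseteq> {..<sum_list ms}"
  using block_start_mono[of "Suc k" "length ms" ms] unfolding block_def block_start_length by auto

lemma in_block_iff:
  assumes "i \<in> block ms m"
  shows "i \<in> block ms k \<longleftrightarrow> k = m"
proof
  assume "i \<in> block ms k"
  show "k = m"
  proof (rule ccontr)
    assume "k \<noteq> m"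
    then have "Suc k \<le> m \<or> Suc m \<le> k" by linarith
    then show False
      using block_start_mono[of "Suc k" m ms] block_start_mono[of "Suc m" k ms] assms \<open>i \<in> block ms k\<close>
      unfolding block_def by auto
  qed
qed (use assms in simp)

lemma sum_over_blocks:
  "m \<le> length ms \<Longrightarrow> (\<Sum>i<block_start ms m. f i) = (\<Sum>k<m. \<Sum>i\<in>block ms k. f i)"
proof (induction m)
  case (Suc m)
  have "(\<Sum>i<block_start ms (Suc m). f i) = (\<Sum>i<block_start ms m. f i) + (\<Sum>i\<in>block ms m. f i)"
    using block_start_mono[of m "Suc m" ms] unfolding block_def
    by (simp add: sum.atLeastLessThan_concat lessThan_atLeast0)
  then show ?case using Suc by simp
qed (simp add: block_start_def)

lemma block_mirror:
  assumes "rev ms = ms" "k < length ms" "i \<in> block ms k"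
  shows "sum_list ms - 1 - i \<in> block ms (length ms - 1 - k)"
proof -
  have flip: "block_start ms k' + block_start ms (length ms - k') = sum_list ms"
    if "k' \<le> length ms" for k'
  proof -
    have "block_start ms (length ms - k') = sum_list (take (length ms - k') (rev ms))"
      using assms(1) unfolding block_start_def by simp
    also have "\<dots> = sum_list (drop k' ms)"
      using that by (simp add: take_rev sum_list_rev)
    finally
    show ?thesis unfolding block_start_def by (metis append_take_drop_id sum_list_append)
  qed
  have "Suc (length ms - 1 - k) = length ms - k" using assms(2) by simp
  then show ?thesis
    using flip[of k] flip[of "Suc k"] assms(2,3) unfolding block_def by auto
qed

lemma root_of_M_iff_block:
  assumes "std_levi G ms"
  shows "root_of_M G ms i j \<longleftrightarrow> i \<noteq> j \<and> (\<exists>k<length ms. i \<in> block ms k \<and> j \<in> block ms k)"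
proof -
  have "i < dimN G" if "k < length ms" "i \<in> block ms k" for i k
    using block_subset[OF that(1)] that(2) assms unfolding std_levi_def by auto
  then show ?thesis
    unfolding root_of_M_def same_block_iff by blast
qed

lemma sum_coroot_block_eq_0:
  assumes "std_levi G ms" "root_of_M G ms p q" "k < length ms"
  shows "(\<Sum>t\<in>block ms k. coroot G p q t) = 0"
proof -
  let ?N = "dimN G" and ?L = "length ms"
  obtain m where m: "m < ?L" "p \<in> block ms m" "q \<in> block ms m"
    using assms(1,2) root_of_M_iff_block by blast
  have "p \<in> block ms k \<longleftrightarrow> q \<in> block ms k"
    using in_block_iff[OF m(2)] in_block_iff[OF m(3)] by simp
  moreover have "?N - 1 - p \<in> block ms k \<longleftrightarrow> ?N - 1 - q \<in> block ms k" if "is_GSp G"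
  proof -
    have "rev ms = ms" "sum_list ms = ?N"
      using assms(1) that unfolding std_levi_def by auto
    then have "?N - 1 - p \<in> block ms (?L - 1 - m)" "?N - 1 - q \<in> block ms (?L - 1 - m)"
      using block_mirror[OF _ m(1) m(2)] block_mirror[OF _ m(1) m(3)] by simp_all
    then show ?thesis
      using in_block_iff by simp
  qed
  moreover have "finite (block ms k)"
    unfolding block_def by simp
  ultimately show ?thesis
    unfolding sum_coroot sum_ev by (cases "is_GSp G") simp_all
qed

lemma kappa_eq_imp_sum_block_eq:
  assumes "std_levi G ms" "kappa_eq G ms x y" "k < length ms"
  shows "(\<Sum>i\<in>block ms k. x i) = (\<Sum>i\<in>block ms k. y i)"
proof -
  obtain c where c: "\<forall>t<dimN G. x t - y t = coroot_comb G (root_of_M G ms) c t"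
    using assms(2) unfolding kappa_eq_iff_coroot_comb by blast
  have "block ms k \<subseteq> {..<dimN G}"
    using block_subset assms(1,3) unfolding std_levi_def by metis
  then have "(\<Sum>i\<in>block ms k. x i - y i) = (\<Sum>i\<in>block ms k. coroot_comb G (root_of_M G ms) c i)"
    using c by (intro sum.cong) auto
  also have "\<dots> = 0"
    unfolding sum_coroot_comb using sum_coroot_block_eq_0[OF assms(1) _ assms(3)]
    by (intro sum.neutral ballI) simp
  finally show ?thesis by (simp add: sum_subtractf)
qed

lemma kappa_eq_imp_partial_sum_eq:
  assumes "kappa_eq G ms x y"
  shows "partial_sum (dimN G) x = partial_sum (dimN G) y"
proof -
  obtain c where c: "\<forall>t<dimN G. x t - y t = coroot_comb G (root_of_M G ms) c t"
    using assms unfolding kappa_eq_iff_coroot_comb by blast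
  have "partial_sum (dimN G) x - partial_sum (dimN G) y
      = (\<Sum>t<dimN G. coroot_comb G (root_of_M G ms) c t)"
    unfolding partial_sum_diff using c by (intro sum.cong) auto
  also have "\<dots> = 0"
    unfolding sum_coroot_comb root_of_M_def by (intro sum.neutral ballI) (simp add: sum_coroot_eq_0)
  finally show ?thesis by simp
qed

lemma sum_max_0_eq_max_sum:
  assumes "(\<forall>i\<in>B. 0 \<le> f i) \<or> (\<forall>i\<in>B. f i \<le> (0::rat))"
  shows "(\<Sum>i\<in>B. max (f i) 0) = max (\<Sum>i\<in>B. f i) 0"
  using assms
proof
  assume "\<forall>i\<in>B. 0 \<le> f i"
  then show ?thesis by (simp add: sum_nonneg)
next
  assume "\<forall>i\<in>B. f i \<le> 0"
  then show ?thesis by (simp add: sum_nonpos max_absorb2)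
qed

lemma max_sum_le_sum_max_0: "max (\<Sum>i\<in>B. f i) 0 \<le> (\<Sum>i\<in>B. max (f i) (0::rat))"
  by (simp add: sum_mono sum_nonneg)

lemma same_side_if_integral_spread_le_1:
  assumes "\<forall>i\<in>B. y i \<in> \<int>" "\<forall>i\<in>B. \<forall>j\<in>B. y i - y j \<le> (1::rat)" "a \<in> \<int>"
  shows "(\<forall>i\<in>B. a \<le> y i) \<or> (\<forall>i\<in>B. y i \<le> a)"
proof (rule disjCI)
  assume "\<not> (\<forall>i\<in>B. y i \<le> a)"
  then obtain i0 where "i0 \<in> B" "a < y i0" by force
  then have "1 \<le> y i0 - a"
    using Ints_nonzero_abs_ge1[of "y i0 - a"] assms(1,3) by auto
  then show "\<forall>i\<in>B. a \<le> y i"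
    using assms(2) \<open>i0 \<in> B\<close> by force
qed

lemma excess_eq_sum_over_blocks:
  assumes "std_levi G ms"
  shows "excess (dimN G) a x = (\<Sum>k<length ms. \<Sum>i\<in>block ms k. max (x i - a) 0)"
  using sum_over_blocks[of "length ms" ms] assms
  unfolding excess_def block_start_length std_levi_def by simp

lemma inXMQ_constant_on_block:
  assumes "std_levi G ms" "inXMQ G ms x" "k < length ms" "i \<in> block ms k" "j \<in> block ms k"
  shows "x i = x j"
  using assms root_of_M_iff_block[OF assms(1), of i j] unfolding inXMQ_def by auto

lemma M_minuscule_spread_on_block:
  assumes "std_levi G ms" "M_minuscule G ms x" "k < length ms" "i \<in> block ms k" "j \<in> block ms k"
  shows "x i - x j \<le> 1"
  using assms root_of_M_iff_block[OF assms(1), of i j] unfolding M_minuscule_def by fastforce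

lemma sum_block_max_eq_if_kappa_eq:
  assumes "std_levi G ms" "inXMQ G ms nu" "kappa_eq G ms nut nu" "k < length ms"
  shows "(\<Sum>i\<in>block ms k. max (nu i - a) 0) = max (\<Sum>i\<in>block ms k. nut i - a) 0"
proof -
  have "(\<Sum>i\<in>block ms k. max (nu i - a) 0) = max (\<Sum>i\<in>block ms k. nu i - a) 0"
  proof (rule sum_max_0_eq_max_sum)
    show "(\<forall>i\<in>block ms k. 0 \<le> nu i - a) \<or> (\<forall>i\<in>block ms k. nu i - a \<le> 0)"
      using inXMQ_constant_on_block[OF assms(1,2,4)] by (metis diff_ge_0_iff_ge diff_le_0_iff_le linorder_linear)
  qed
  also have "(\<Sum>i\<in>block ms k. nu i - a) = (\<Sum>i\<in>block ms k. nut i - a)"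
    using kappa_eq_imp_sum_block_eq[OF assms(1,3,4)] by (simp add: sum_subtractf)
  finally show ?thesis .
qed

lemma excess_le_if_kappa_eq:
  assumes "std_levi G ms" "inXMQ G ms nu" "kappa_eq G ms nut nu"
  shows "excess (dimN G) a nu \<le> excess (dimN G) a nut"
  unfolding excess_eq_sum_over_blocks[OF assms(1)]
proof (rule sum_mono)
  fix k assume "k \<in> {..<length ms}"
  then show "(\<Sum>i\<in>block ms k. max (nu i - a) 0) \<le> (\<Sum>i\<in>block ms k. max (nut i - a) 0)"
    using sum_block_max_eq_if_kappa_eq[OF assms, of k a] max_sum_le_sum_max_0[of "\<lambda>i. nut i - a"]
    by simp
qed

lemma excess_eq_if_kappa_eq_minuscule:
  assumes "std_levi G ms" "inXMQ G ms nu" "kappa_eq G ms nut nu"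
    and "inX G nut" "M_minuscule G ms nut" "a \<in> \<int>"
  shows "excess (dimN G) a nut = excess (dimN G) a nu"
  unfolding excess_eq_sum_over_blocks[OF assms(1)]
proof (rule sum.cong[OF refl])
  fix k assume "k \<in> {..<length ms}"
  then have k: "k < length ms" by simp
  have "\<forall>i\<in>block ms k. nut i \<in> \<int>"
    using assms(1,4) block_subset[OF k] unfolding inX_def std_levi_def by auto
  then have "(\<forall>i\<in>block ms k. a \<le> nut i) \<or> (\<forall>i\<in>block ms k. nut i \<le> a)"
    using same_side_if_integral_spread_le_1 M_minuscule_spread_on_block[OF assms(1,5) k] assms(6)
    by blast
  then have "(\<Sum>i\<in>block ms k. max (nut i - a) 0) = max (\<Sum>i\<in>block ms k. nut i - a) 0"
    by (intro sum_max_0_eq_max_sum) auto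
  also have "\<dots> = (\<Sum>i\<in>block ms k. max (nu i - a) 0)"
    using sum_block_max_eq_if_kappa_eq[OF assms(1-3) k] by simp
  finally show "(\<Sum>i\<in>block ms k. max (nut i - a) 0) = (\<Sum>i\<in>block ms k. max (nu i - a) 0)" .
qed

section \<open>Weyl orbits\<close>

lemma sum_W_orbit:
  assumes "in_W_orbit G y x"
  shows "(\<Sum>k<dimN G. f (y k)) = (\<Sum>k<dimN G. f (x k))"
proof -
  obtain s where s: "s \<in> weyl G" "\<forall>k<dimN G. y k = x (s k)"
    using assms unfolding in_W_orbit_def by blast
  then have "(\<Sum>k<dimN G. f (y k)) = (\<Sum>k<dimN G. f (x (s k)))"
    by (intro sum.cong) auto
  also have "\<dots> = (\<Sum>k<dimN G. f (x k))"
    using s(1) unfolding weyl_def by (intro sum.reindex_bij_betw) simp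
  finally show ?thesis .
qed

lemma inXQ_W_orbit:
  assumes "in_W_orbit G y x" "inXQ G x"
  shows "inXQ G y"
  unfolding inXQ_def
proof (intro impI allI)
  fix i assume G: "is_GSp G" and i: "i < dimN G"
  let ?N = "dimN G"
  obtain s where s: "bij_betw s {..<?N} {..<?N}" "\<forall>k<?N. s (?N - 1 - k) = ?N - 1 - s k"
    and y: "\<forall>k<?N. y k = x (s k)"
    using assms(1) G unfolding in_W_orbit_def weyl_def by blast
  have x: "x k + x (?N - 1 - k) = x 0 + x (?N - 1)" if "k < ?N" for k
    using assms(2) G that unfolding inXQ_def by blast
  have y_pairs: "y k + y (?N - 1 - k) = x 0 + x (?N - 1)" if "k < ?N" for k
  proof -
    have "s k < ?N" using bij_betw_apply[OF s(1)] that by simp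
    then show ?thesis using x[of "s k"] y s(2) that by simp
  qed
  show "y i + y (?N - 1 - i) = y 0 + y (?N - 1)"
    using y_pairs[OF i] y_pairs[of 0] i by simp
qed

theorem proposition4p8:
  fixes G :: grp and ms :: "nat list" and nu :: "nat \<Rightarrow> rat"
  assumes "valid_grp G"
    and "std_levi G ms"
    and "inXMQ G ms nu" and "dominant G nu"
    and "kappa_integral G ms nu"
    and "inX G nut" and "M_dominant G ms nut" and "M_minuscule G ms nut"
    and "kappa_eq G ms nut nu"
    and "in_W_orbit G lam nut" and "dominant G lam"
    and "inX G mu" and "dominant G mu"
    and "coroot_le G nu mu"
  shows "coroot_le G nu lam \<and> coroot_le G lam mu"
proof -
  let ?N = "dimN G"
  have inXQ: "inXQ G nu" "inXQ G lam" "inXQ G mu"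
    using assms(3,6,10,12) inXQ_W_orbit unfolding inXMQ_def inX_def by blast+
  have total: "partial_sum ?N nu = partial_sum ?N lam" "partial_sum ?N nu = partial_sum ?N mu"
    using kappa_eq_imp_partial_sum_eq[OF assms(9)] sum_W_orbit[OF assms(10), of id]
      coroot_le_imp_partial_sum_eq[OF assms(14)] unfolding partial_sum_def by simp_all
  have excess_lam: "excess ?N a lam = excess ?N a nut" for a
    unfolding excess_def by (rule sum_W_orbit[OF assms(10)])
  have "excess ?N a nu \<le> excess ?N a lam" for a
    unfolding excess_lam by (rule excess_le_if_kappa_eq[OF assms(2,3,9)])
  then have "partial_sum p nu \<le> partial_sum p lam" if "p \<le> ?N" for p
    using assms(11) that unfolding dominant_def
    by (intro partial_sum_le_if_excess_le[where S = UNIV]) auto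
  then have nu_lam: "coroot_le G nu lam"
    unfolding coroot_le_iff_partial_sum_le[OF inXQ(1,2)] using total by simp
  have "excess ?N a lam \<le> excess ?N a mu" if "a \<in> \<int>" for a
    unfolding excess_lam excess_eq_if_kappa_eq_minuscule[OF assms(2,3,9,6,8) that]
    using assms(4) coroot_le_imp_partial_sum_le[OF assms(14)] unfolding dominant_def
    by (intro excess_mono_if_partial_sum_le) auto
  then have "partial_sum p lam \<le> partial_sum p mu" if "p \<le> ?N" for p
    using assms(12,13) that unfolding dominant_def inX_def
    by (intro partial_sum_le_if_excess_le[where S = \<int>]) auto
  then have "coroot_le G lam mu"
    unfolding coroot_le_iff_partial_sum_le[OF inXQ(2,3)] using total by simp
  with nu_lam show ?thesis ..
qed

end
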